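(* Let $R$ be a subring of $\mathbb{C}$ with field of fractions $K\subseteq\mathbb{C}$, suppose the transcendence degree of $K$ over $\mathbb{Q}$ is $k<\infty$, and let $t_1,\dots,t_k\in R$ be algebraically independent over $\mathbb{Q}$. Let $f\colon R\to\mathbb{C}$ be additive and such that $q=f/j$ (i.e. $x\mapsto f(x)/x$), as a map from the semigroup $R^*$ to $\mathbb{C}$, is a generalized polynomial. If $f=0$ on the multiplicative semigroup $G$ generated by $t_1,\dots,t_k$, then $f=0$ on $R$.
   Context: Subrings contain $1$; the multiplicative semigroup generated by $t_1,\dots,t_k$ consists of all monomials $t_1^{i_1}\cdots t_k^{i_k}$ with $i_1,\dots,i_k\ge 0$ (including $1$). $R^*$ is the semigroup $R\setminus\{0\}$ under multiplication. For $f$ on an abelian semigroup $G$, $\Delta_g f(x)=f(x\cdot g)-f(x)$; $f$ is a generalized polynomial if for some $m$, $\Delta_{g_1}\cdots\Delta_{g_{m+1}}f=0$ for all $g_1,\dots,g_{m+1}$ in the semigroup. *)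

theory Defs
  imports Complex_Main
begin

definition subring_C :: "complex set \<Rightarrow> bool" where
  "subring_C R \<longleftrightarrow> 0 \<in> R \<and> 1 \<in> R \<and> (\<forall>x\<in>R. \<forall>y\<in>R. x + y \<in> R \<and> x * y \<in> R \<and> - x \<in> R)"

definition frac_field :: "complex set \<Rightarrow> complex set" where
  "frac_field R = {a / b | a b. a \<in> R \<and> b \<in> R \<and> b \<noteq> 0}"

definition monom_val :: "nat \<Rightarrow> (nat \<Rightarrow> complex) \<Rightarrow> (nat \<Rightarrow> nat) \<Rightarrow> complex" where
  "monom_val n t e = (\<Prod>i<n. t i ^ e i)"

definition alg_indep :: "nat \<Rightarrow> (nat \<Rightarrow> complex) \<Rightarrow> bool" where
  "alg_indep n t \<longleftrightarrow>
     (\<forall>S (c :: (nat \<Rightarrow> nat) \<Rightarrow> rat). finite S \<longrightarrow> (\<forall>e\<in>S. \<forall>i\<ge>n. e i = 0) \<longrightarrow>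
        (\<Sum>e\<in>S. of_rat (c e) * monom_val n t e) = 0 \<longrightarrow> (\<forall>e\<in>S. c e = 0))"

definition trdeg_eq :: "complex set \<Rightarrow> nat \<Rightarrow> bool" where
  "trdeg_eq K k \<longleftrightarrow>
     (\<exists>t. (\<forall>i<k. t i \<in> K) \<and> alg_indep k t) \<and>
     \<not> (\<exists>t. (\<forall>i<Suc k. t i \<in> K) \<and> alg_indep (Suc k) t)"

definition gen_semigroup :: "nat \<Rightarrow> (nat \<Rightarrow> complex) \<Rightarrow> complex set" where
  "gen_semigroup k t = {monom_val k t e | e. True}"

definition mdelta :: "complex \<Rightarrow> (complex \<Rightarrow> complex) \<Rightarrow> complex \<Rightarrow> complex" where
  "mdelta g f x = f (x * g) - f x"

fun mdeltas :: "complex list \<Rightarrow> (complex \<Rightarrow> complex) \<Rightarrow> complex \<Rightarrow> complex" where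
  "mdeltas [] f = f"
| "mdeltas (g # gs) f = mdelta g (mdeltas gs f)"

definition gen_poly :: "complex set \<Rightarrow> (complex \<Rightarrow> complex) \<Rightarrow> bool" where
  "gen_poly G f \<longleftrightarrow> (\<exists>m::nat. \<forall>gs. length gs = Suc m \<longrightarrow> set gs \<subseteq> G \<longrightarrow>
      (\<forall>x\<in>G. mdeltas gs f x = 0))"

end

theory Submission
  imports Defs
begin

(* Write q = f/j. By induction on the order m of q, applied to f_g(x) = f(g x)/g - f(x), whose
   quotient is Delta_g q, the quotient q is invariant under G: q(g y) = q(y).
   Every nonzero x in R is algebraic over Q(t), so there is an integer polynomial P with
   P(t, x) = 0 but (dP/dX)(t, x) <> 0 (take P of least degree in X). Applying f to P(t, x) z = 0
   and using the invariance shows that u(n) = q(x^n z) satisfies a linear recurrence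
   sum_e w_e u(n + d_e) = 0 with sum_e w_e = 0 and sum_e w_e d_e <> 0. Since q is a generalized
   polynomial, u is a polynomial sequence, and such a recurrence forces it to be constant.
   Hence q(x) = q(1) = f(1) = 0. *)

section \<open>Subrings of the complex numbers and additive maps\<close>

definition additive_on :: "complex set \<Rightarrow> (complex \<Rightarrow> complex) \<Rightarrow> bool" where
  "additive_on R f \<longleftrightarrow> (\<forall>x\<in>R. \<forall>y\<in>R. f (x + y) = f x + f y)"

lemma subring_C_zero: "subring_C R \<Longrightarrow> 0 \<in> R"
  and subring_C_one: "subring_C R \<Longrightarrow> 1 \<in> R"
  and subring_C_add: "subring_C R \<Longrightarrow> x \<in> R \<Longrightarrow> y \<in> R \<Longrightarrow> x + y \<in> R"
  and subring_C_mult: "subring_C R \<Longrightarrow> x \<in> R \<Longrightarrow> y \<in> R \<Longrightarrow> x * y \<in> R"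
  and subring_C_uminus: "subring_C R \<Longrightarrow> x \<in> R \<Longrightarrow> - x \<in> R"
  unfolding subring_C_def by auto

lemma subring_C_power: "subring_C R \<Longrightarrow> x \<in> R \<Longrightarrow> x ^ n \<in> R"
  by (induction n) (auto intro: subring_C_one subring_C_mult)

lemma subring_C_sum: "subring_C R \<Longrightarrow> (\<And>e. e \<in> S \<Longrightarrow> y e \<in> R) \<Longrightarrow> sum y S \<in> R"
  by (induction S rule: infinite_finite_induct) (auto intro: subring_C_zero subring_C_add)

lemma subring_C_of_int:
  assumes R: "subring_C R"
  shows "of_int m \<in> R"
proof -
  have of_nat: "of_nat n \<in> R" for n
    by (induction n) (auto intro: subring_C_zero[OF R] subring_C_one[OF R] subring_C_add[OF R])
  show ?thesis
    by (cases m rule: int_cases2) (use of_nat subring_C_uminus[OF R] in simp_all)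
qed

lemma subring_C_subset_frac_field: "subring_C R \<Longrightarrow> R \<subseteq> frac_field R"
  unfolding frac_field_def by (force dest: subring_C_one)

lemma additive_on_zero: "subring_C R \<Longrightarrow> additive_on R f \<Longrightarrow> f 0 = 0"
  unfolding additive_on_def using subring_C_zero by fastforce

lemma additive_on_sum:
  assumes "subring_C R" "additive_on R f" "\<And>e. e \<in> S \<Longrightarrow> y e \<in> R"
  shows "f (sum y S) = (\<Sum>e\<in>S. f (y e))"
  using assms(3)
proof (induction S rule: infinite_finite_induct)
  case (insert a S)
  have "y a \<in> R" "sum y S \<in> R"
    using insert.prems by (auto intro: subring_C_sum[OF assms(1)])
  have "f (sum y (insert a S)) = f (y a + sum y S)"
    using insert.hyps by simp
  also have "\<dots> = f (y a) + f (sum y S)"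
    using assms(2) \<open>y a \<in> R\<close> \<open>sum y S \<in> R\<close> unfolding additive_on_def by blast
  also have "\<dots> = f (y a) + (\<Sum>e\<in>S. f (y e))"
    using insert.IH insert.prems by simp
  also have "\<dots> = (\<Sum>e\<in>insert a S. f (y e))"
    using insert.hyps by simp
  finally show ?case .
qed (simp_all add: additive_on_zero[OF assms(1,2)])

lemma additive_on_uminus:
  assumes "subring_C R" "additive_on R f" "y \<in> R"
  shows "f (- y) = - f y"
proof -
  have "f (y + - y) = f y + f (- y)"
    using assms subring_C_uminus[OF assms(1,3)] unfolding additive_on_def by blast
  then show ?thesis using additive_on_zero[OF assms(1,2)] by (simp add: eq_neg_iff_add_eq_0 add.commute)
qed

lemma additive_on_of_int_mult:
  assumes R: "subring_C R" and f: "additive_on R f" and y: "y \<in> R"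
  shows "f (of_int m * y) = of_int m * f y"
proof -
  have of_nat: "f (of_nat n * y) = of_nat n * f y" for n
    using additive_on_sum[OF R f, of "{..<n}" "\<lambda>_. y"] y by simp
  show ?thesis
  proof (cases m rule: int_cases2)
    case (nonneg n)
    then show ?thesis using of_nat by simp
  next
    case (nonpos n)
    have "of_nat n * y \<in> R"
      using subring_C_mult[OF R subring_C_of_int[OF R, of "int n"] y] by simp
    then show ?thesis using nonpos of_nat additive_on_uminus[OF R f] by simp
  qed
qed

lemma additive_on_int_combination:
  assumes R: "subring_C R" and f: "additive_on R f" and y: "\<And>e. e \<in> S \<Longrightarrow> y e \<in> R"
  shows "f (\<Sum>e\<in>S. of_int (c e) * y e) = (\<Sum>e\<in>S. of_int (c e) * f (y e))"
proof -
  have "f (\<Sum>e\<in>S. of_int (c e) * y e) = (\<Sum>e\<in>S. f (of_int (c e) * y e))"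
    by (rule additive_on_sum[OF R f]) (rule subring_C_mult[OF R subring_C_of_int[OF R] y])
  also have "\<dots> = (\<Sum>e\<in>S. of_int (c e) * f (y e))"
    by (rule sum.cong) (simp_all add: additive_on_of_int_mult[OF R f y])
  finally show ?thesis .
qed

section \<open>Monomials and the semigroup they form\<close>

lemma monom_val_Suc: "monom_val (Suc k) s e = monom_val k s e * s k ^ e k"
  unfolding monom_val_def by simp

lemma monom_val_fun_upd: "k \<le> i \<Longrightarrow> monom_val k (s(i := a)) e = monom_val k s e"
  unfolding monom_val_def by (rule prod.cong) auto

lemma monom_val_exponent_upd: "k \<le> i \<Longrightarrow> monom_val k s (e(i := a)) = monom_val k s e"
  unfolding monom_val_def by (rule prod.cong) auto

lemma monom_val_mult: "monom_val k s e1 * monom_val k s e2 = monom_val k s (\<lambda>i. e1 i + e2 i)"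
  unfolding monom_val_def by (simp add: power_add prod.distrib)

lemma monom_val_in_subring:
  "subring_C R \<Longrightarrow> \<forall>i<k. s i \<in> R \<Longrightarrow> monom_val k s e \<in> R"
  by (induction k) (auto simp: monom_val_Suc monom_val_def intro: subring_C_one subring_C_mult subring_C_power)

lemma alg_indep_fun_upd: "k \<le> i \<Longrightarrow> alg_indep k (s(i := a)) \<longleftrightarrow> alg_indep k s"
  unfolding alg_indep_def by (simp add: monom_val_fun_upd)

lemma alg_indep_nonzero:
  assumes ind: "alg_indep k s" and i: "i < k"
  shows "s i \<noteq> 0"
proof
  assume s0: "s i = 0"
  define d where "d = (\<lambda>j::nat. if j = i then 1 else (0::nat))"
  have "monom_val k s d = (\<Prod>j<k. if j = i then s j else 1)"
    unfolding monom_val_def by (rule prod.cong) (auto simp: d_def)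
  with i s0 have "(\<Sum>e\<in>{d}. of_rat ((\<lambda>_. 1) e) * monom_val k s e) = 0" by simp
  moreover have "\<forall>e\<in>{d}. \<forall>j\<ge>k. e j = 0" using i by (auto simp: d_def)
  ultimately show False
    using spec[OF spec[OF ind[unfolded alg_indep_def], of "{d}"], of "\<lambda>_. 1"] by simp
qed

lemma monom_val_nonzero: "alg_indep k s \<Longrightarrow> monom_val k s e \<noteq> 0"
  by (auto simp: monom_val_def dest: alg_indep_nonzero)

lemma gen_semigroup_subset:
  assumes "subring_C R" "\<forall>i<k. t i \<in> R" "alg_indep k t"
  shows "gen_semigroup k t \<subseteq> R - {0}"
  using monom_val_in_subring[OF assms(1,2)] monom_val_nonzero[OF assms(3)]
  unfolding gen_semigroup_def by auto

lemma monom_val_in_gen_semigroup: "monom_val k t e \<in> gen_semigroup k t"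
  unfolding gen_semigroup_def by blast

lemma gen_semigroup_one: "1 \<in> gen_semigroup k t"
  using monom_val_in_gen_semigroup[of k t "\<lambda>_. 0"] by (simp add: monom_val_def)

lemma gen_semigroup_mult:
  assumes "g \<in> gen_semigroup k t" "h \<in> gen_semigroup k t"
  shows "g * h \<in> gen_semigroup k t"
proof -
  obtain e1 e2 where "g = monom_val k t e1" "h = monom_val k t e2"
    using assms unfolding gen_semigroup_def by blast
  then have "g * h = monom_val k t (\<lambda>i. e1 i + e2 i)"
    by (simp add: monom_val_mult)
  then show ?thesis
    using monom_val_in_gen_semigroup by simp
qed

section \<open>Integer algebraic relations\<close>

(* (S, c) encodes the nonzero polynomial sum_{e in S} c_e X^e in X_0, ..., X_{n-1}. *)
definition int_relation ::
    "nat \<Rightarrow> (nat \<Rightarrow> complex) \<Rightarrow> (nat \<Rightarrow> nat) set \<Rightarrow> ((nat \<Rightarrow> nat) \<Rightarrow> int) \<Rightarrow> bool" where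
  "int_relation n s S c \<longleftrightarrow> finite S \<and> S \<noteq> {} \<and> (\<forall>e\<in>S. c e \<noteq> 0) \<and> (\<forall>e\<in>S. \<forall>i\<ge>n. e i = 0) \<and>
     (\<Sum>e\<in>S. of_int (c e) * monom_val n s e) = 0"

lemma alg_indep_no_int_relation: "alg_indep n s \<Longrightarrow> \<not> int_relation n s S c"
proof
  assume ind: "alg_indep n s" and rel: "int_relation n s S c"
  have "(\<Sum>e\<in>S. of_rat ((\<lambda>e. of_int (c e)) e) * monom_val n s e) = 0"
    using rel unfolding int_relation_def by simp
  then have "\<forall>e\<in>S. (\<lambda>e. of_int (c e) :: rat) e = 0"
    using spec[OF spec[OF ind[unfolded alg_indep_def], of S], of "\<lambda>e. of_int (c e)"] rel
    unfolding int_relation_def by simp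
  then show False
    using rel unfolding int_relation_def by auto
qed

lemma rat_common_denominator:
  fixes c :: "'a \<Rightarrow> rat"
  assumes "finite S"
  shows "\<exists>D::int. D > 0 \<and> (\<forall>e\<in>S. of_int D * c e \<in> \<int>)"
proof (intro exI conjI ballI)
  define den where "den e = snd (quotient_of (c e))" for e
  show "(\<Prod>e\<in>S. den e) > 0"
    by (rule prod_pos) (simp add: den_def quotient_of_denom_pos')
  fix e assume e: "e \<in> S"
  obtain p q where pq: "quotient_of (c e) = (p, q)"
    by fastforce
  then have "of_int q * c e = of_int p"
    using quotient_of_denom_pos[OF pq] quotient_of_div[OF pq] by simp
  then have "of_int (den e) * c e = of_int (fst (quotient_of (c e)))"
    using pq by (simp add: den_def)
  moreover have "(\<Prod>e\<in>S. den e) = den e * (\<Prod>e\<in>S - {e}. den e)"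
    using assms e by (simp add: prod.remove)
  ultimately have "of_int (\<Prod>e\<in>S. den e) * c e =
      of_int (fst (quotient_of (c e))) * of_int (\<Prod>e\<in>S - {e}. den e)"
    by (simp add: algebra_simps)
  then show "of_int (\<Prod>e\<in>S. den e) * c e \<in> \<int>"
    by (metis Ints_of_int of_int_mult)
qed

lemma not_alg_indep_imp_int_relation:
  assumes "\<not> alg_indep n s"
  shows "\<exists>S c. int_relation n s S c"
proof -
  obtain S and c :: "(nat \<Rightarrow> nat) \<Rightarrow> rat" where
    S: "finite S" "\<forall>e\<in>S. \<forall>i\<ge>n. e i = 0" "(\<Sum>e\<in>S. of_rat (c e) * monom_val n s e) = 0"
      and nonzero: "\<exists>e\<in>S. c e \<noteq> 0"
    using assms unfolding alg_indep_def by auto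
  define S' where "S' = {e\<in>S. c e \<noteq> 0}"
  have "finite S'" using S(1) unfolding S'_def by simp
  then obtain D :: int where D: "D > 0" "\<forall>e\<in>S'. of_int D * c e \<in> \<int>"
    using rat_common_denominator by blast
  then have "\<forall>e\<in>S'. \<exists>m::int. of_int m = of_int D * c e"
    by (metis Ints_cases)
  then obtain c' where c': "\<forall>e\<in>S'. of_int (c' e) = of_int D * c e"
    by metis
  have "(\<Sum>e\<in>S'. of_int (c' e) * monom_val n s e) = of_int D * (\<Sum>e\<in>S'. of_rat (c e) * monom_val n s e)"
    unfolding sum_distrib_left
  proof (rule sum.cong)
    fix e assume "e \<in> S'"
    then have "(of_int (c' e) :: complex) = of_rat (of_int D * c e)"
      using c' by (metis of_rat_of_int_eq)
    then show "of_int (c' e) * monom_val n s e = of_int D * (of_rat (c e) * monom_val n s e)"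
      by (simp add: of_rat_mult)
  qed simp
  also have "(\<Sum>e\<in>S'. of_rat (c e) * monom_val n s e) = (\<Sum>e\<in>S. of_rat (c e) * monom_val n s e)"
    unfolding S'_def by (rule sum.mono_neutral_left) (use S(1) in auto)
  finally have "int_relation n s S' c'"
    unfolding int_relation_def using S nonzero c' D(1) \<open>finite S'\<close>
    by (auto simp: S'_def)
  then show ?thesis by blast
qed

lemma int_relation_degree_pos:
  assumes ind: "alg_indep k s" and rel: "int_relation (Suc k) s S c"
  shows "\<exists>e\<in>S. 0 < e k"
proof (rule ccontr)
  assume "\<not> (\<exists>e\<in>S. 0 < e k)"
  then have zero: "\<forall>e\<in>S. e k = 0" by simp
  have "\<forall>e\<in>S. \<forall>i\<ge>k. e i = 0"
  proof (intro ballI allI impI)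
    fix e i assume "e \<in> S" "k \<le> i"
    then show "e i = 0"
      using zero rel unfolding int_relation_def by (cases "i = k") auto
  qed
  moreover have "(\<Sum>e\<in>S. of_int (c e) * monom_val (Suc k) s e) = (\<Sum>e\<in>S. of_int (c e) * monom_val k s e)"
    by (rule sum.cong) (simp_all add: monom_val_Suc zero)
  ultimately have "int_relation k s S c"
    using rel unfolding int_relation_def by simp
  then show False
    using alg_indep_no_int_relation[OF ind] by blast
qed

(* If X_k dP/dX_k vanishes at s and s k <> 0, then dP/dX_k is a relation of lower degree in X_k. *)
lemma int_relation_lower_degree:
  assumes rel: "int_relation (Suc k) s S c" and pos: "\<exists>e\<in>S. 0 < e k" and sk: "s k \<noteq> 0"
    and deg: "\<forall>e\<in>S. e k \<le> Suc n"
    and deriv: "(\<Sum>e\<in>S. of_int (c e) * of_nat (e k) * monom_val (Suc k) s e) = 0"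
  shows "\<exists>S' c'. int_relation (Suc k) s S' c' \<and> (\<forall>e\<in>S'. e k \<le> n)"
proof -
  define A where "A = {e\<in>S. 0 < e k}"
  define lower where "lower e = e(k := e k - 1)" for e :: "nat \<Rightarrow> nat"
  define c' where "c' e = c (e(k := Suc (e k))) * int (Suc (e k))" for e
  have fin: "finite A" "finite S"
    using rel unfolding A_def int_relation_def by auto
  have raise_lower: "(lower e)(k := Suc (lower e k)) = e" and Suc_lower: "Suc (lower e k) = e k"
    if "e \<in> A" for e
    using that unfolding A_def lower_def by auto
  have inj: "inj_on lower A"
    by (metis inj_onI raise_lower)
  have c'_lower: "c' (lower e) = c e * int (e k)" if "e \<in> A" for e
    unfolding c'_def using raise_lower[OF that] Suc_lower[OF that] by simp
  have monom_lower: "s k * monom_val (Suc k) s (lower e) = monom_val (Suc k) s e" if "e \<in> A" for e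
  proof -
    have "s k * s k ^ lower e k = s k ^ e k"
      using Suc_lower[OF that] by (metis power_Suc)
    then show ?thesis
      unfolding monom_val_Suc lower_def by (simp add: monom_val_exponent_upd mult_ac)
  qed
  have "s k * (\<Sum>e\<in>lower ` A. of_int (c' e) * monom_val (Suc k) s e)
      = (\<Sum>e\<in>A. of_int (c' (lower e)) * (s k * monom_val (Suc k) s (lower e)))"
    by (simp add: sum.reindex[OF inj] sum_distrib_left mult_ac)
  also have "\<dots> = (\<Sum>e\<in>A. of_int (c e) * of_nat (e k) * monom_val (Suc k) s e)"
    by (rule sum.cong) (simp_all add: c'_lower monom_lower)
  also have "\<dots> = (\<Sum>e\<in>S. of_int (c e) * of_nat (e k) * monom_val (Suc k) s e)"
    by (rule sum.mono_neutral_left) (auto simp: A_def fin)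
  finally have "(\<Sum>e\<in>lower ` A. of_int (c' e) * monom_val (Suc k) s e) = 0"
    using deriv sk by simp
  moreover have "A \<noteq> {}" "\<forall>e\<in>A. c' (lower e) \<noteq> 0"
    using pos rel c'_lower unfolding A_def int_relation_def by auto
  moreover have "\<forall>e\<in>lower ` A. \<forall>i\<ge>Suc k. e i = 0" "\<forall>e\<in>lower ` A. e k \<le> n"
    using rel deg unfolding A_def lower_def int_relation_def by auto
  ultimately have "int_relation (Suc k) s (lower ` A) c' \<and> (\<forall>e\<in>lower ` A. e k \<le> n)"
    unfolding int_relation_def using fin by auto
  then show ?thesis by blast
qed

lemma exists_int_relation_nonzero_derivative:
  assumes ind: "alg_indep k s" and sk: "s k \<noteq> 0" and dep: "\<not> alg_indep (Suc k) s"
  shows "\<exists>S c. finite S \<and> (\<Sum>e\<in>S. of_int (c e) * monom_val (Suc k) s e) = 0 \<and>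
    (\<Sum>e\<in>S. of_int (c e) * of_nat (e k) * monom_val (Suc k) s e) \<noteq> 0" (is "\<exists>S c. ?good S c")
proof -
  have "int_relation (Suc k) s S c \<Longrightarrow> \<forall>e\<in>S. e k \<le> n \<Longrightarrow> \<exists>S c. ?good S c" for n S c
  proof (induction n arbitrary: S c)
    case 0
    then show ?case
      using int_relation_degree_pos[OF ind] by fastforce
  next
    case (Suc n)
    show ?case
    proof (cases "(\<Sum>e\<in>S. of_int (c e) * of_nat (e k) * monom_val (Suc k) s e) = 0")
      case True
      then show ?thesis
        using int_relation_lower_degree[OF Suc.prems(1) int_relation_degree_pos[OF ind Suc.prems(1)] sk
            Suc.prems(2)] Suc.IH by blast
    next
      case False
      then show ?thesis
        using Suc.prems(1) unfolding int_relation_def by blast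
    qed
  qed
  moreover obtain S c where rel: "int_relation (Suc k) s S c"
    using not_alg_indep_imp_int_relation[OF dep] by blast
  moreover have "\<forall>e\<in>S. e k \<le> (\<Sum>e\<in>S. e k)"
    using rel unfolding int_relation_def by (auto intro: member_le_sum)
  ultimately show ?thesis by blast
qed

lemma exists_relation_over_generators:
  assumes R: "subring_C R" and tr: "trdeg_eq (frac_field R) k"
    and t: "\<forall>i<k. t i \<in> R" and ind: "alg_indep k t" and x: "x \<in> R" "x \<noteq> 0"
  shows "\<exists>S c. finite S \<and> (\<Sum>e\<in>S. of_int (c e) * (monom_val k t e * x ^ e k)) = 0 \<and>
    (\<Sum>e\<in>S. of_int (c e) * of_nat (e k) * (monom_val k t e * x ^ e k)) \<noteq> 0"
proof -
  define s where "s = t(k := x)"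
  have monom_s: "monom_val (Suc k) s e = monom_val k t e * x ^ e k" for e
    unfolding s_def monom_val_Suc by (simp add: monom_val_fun_upd)
  have "\<forall>i<Suc k. s i \<in> frac_field R"
    using t x subring_C_subset_frac_field[OF R] unfolding s_def by (auto simp: less_Suc_eq)
  then have "\<not> alg_indep (Suc k) s"
    using tr unfolding trdeg_eq_def by blast
  moreover have "alg_indep k s"
    using ind unfolding s_def by (simp add: alg_indep_fun_upd)
  ultimately show ?thesis
    using exists_int_relation_nonzero_derivative[of k s] x(2) unfolding monom_s by (simp add: s_def)
qed

section \<open>Recurrences satisfied by polynomial sequences\<close>

definition fwd_diff :: "(nat \<Rightarrow> complex) \<Rightarrow> nat \<Rightarrow> complex" where
  "fwd_diff u n = u (Suc n) - u n"

definition lin_recurrence :: "'a set \<Rightarrow> ('a \<Rightarrow> complex) \<Rightarrow> ('a \<Rightarrow> nat) \<Rightarrow> (nat \<Rightarrow> complex) \<Rightarrow> bool" where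
  "lin_recurrence S w d u \<longleftrightarrow> (\<forall>n. (\<Sum>e\<in>S. w e * u (n + d e)) = 0)"

lemma lin_recurrence_fwd_diff:
  assumes "lin_recurrence S w d u"
  shows "lin_recurrence S w d (fwd_diff u)"
proof -
  have "(\<Sum>e\<in>S. w e * u (Suc n + d e)) = 0" "(\<Sum>e\<in>S. w e * u (n + d e)) = 0" for n
    using assms unfolding lin_recurrence_def by blast+
  then show ?thesis
    unfolding lin_recurrence_def fwd_diff_def by (simp add: right_diff_distrib sum_subtractf)
qed

lemma fwd_diff2_zero_imp_fwd_diff_const:
  assumes "fwd_diff (fwd_diff v) = (\<lambda>_. 0)"
  shows "fwd_diff v n = fwd_diff v 0"
  by (induction n) (use fun_cong[OF assms] in \<open>simp_all add: fwd_diff_def[of "fwd_diff v"]\<close>)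

lemma fwd_diff2_zero_imp_linear:
  assumes "fwd_diff (fwd_diff v) = (\<lambda>_. 0)"
  shows "v n = v 0 + of_nat n * fwd_diff v 0"
proof (induction n)
  case (Suc n)
  have "v (Suc n) = v n + fwd_diff v n"
    by (simp add: fwd_diff_def)
  then show ?case
    using Suc fwd_diff2_zero_imp_fwd_diff_const[OF assms, of n] by (simp add: algebra_simps)
qed simp

(* For v n = a + b n the recurrence at n = 0 reads a sum w + b sum (w d) = 0. *)
lemma lin_recurrence_linear_imp_const:
  assumes rec: "lin_recurrence S w d v" and w: "(\<Sum>e\<in>S. w e) = 0" "(\<Sum>e\<in>S. w e * of_nat (d e)) \<noteq> 0"
    and linear: "fwd_diff (fwd_diff v) = (\<lambda>_. 0)"
  shows "fwd_diff v = (\<lambda>_. 0)"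
proof -
  have "0 = (\<Sum>e\<in>S. w e * v (d e))"
    using spec[OF rec[unfolded lin_recurrence_def], of 0] by simp
  also have "\<dots> = (\<Sum>e\<in>S. v 0 * w e + fwd_diff v 0 * (w e * of_nat (d e)))"
  proof (rule sum.cong)
    fix e
    show "w e * v (d e) = v 0 * w e + fwd_diff v 0 * (w e * of_nat (d e))"
      using fwd_diff2_zero_imp_linear[OF linear, of "d e"] by (simp add: algebra_simps)
  qed simp
  also have "\<dots> = v 0 * (\<Sum>e\<in>S. w e) + fwd_diff v 0 * (\<Sum>e\<in>S. w e * of_nat (d e))"
    by (simp add: sum.distrib sum_distrib_left)
  finally have "fwd_diff v 0 = 0"
    using w by simp
  show ?thesis
  proof
    fix n
    show "fwd_diff v n = 0"
      using fwd_diff2_zero_imp_fwd_diff_const[OF linear, of n] \<open>fwd_diff v 0 = 0\<close> by simp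
  qed
qed

lemma lin_recurrence_poly_imp_const:
  assumes rec: "lin_recurrence S w d u" and w: "(\<Sum>e\<in>S. w e) = 0" "(\<Sum>e\<in>S. w e * of_nat (d e)) \<noteq> 0"
    and poly: "(fwd_diff ^^ M) u = (\<lambda>_. 0)"
  shows "fwd_diff u = (\<lambda>_. 0)"
proof -
  have rec_iter: "lin_recurrence S w d ((fwd_diff ^^ j) u)" for j
    by (induction j) (simp_all add: rec lin_recurrence_fwd_diff)
  have "(fwd_diff ^^ Suc j) u = (\<lambda>_. 0) \<Longrightarrow> fwd_diff u = (\<lambda>_. 0)" for j
  proof (induction j)
    case (Suc j)
    then show ?case
      using lin_recurrence_linear_imp_const[OF rec_iter w] by simp
  qed simp
  moreover have "fwd_diff (\<lambda>_. 0) = (\<lambda>_. 0)"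
    by (simp add: fwd_diff_def fun_eq_iff)
  ultimately show ?thesis
    using poly by (cases M) simp_all
qed

definition mdeltas_vanish :: "complex set \<Rightarrow> nat \<Rightarrow> (complex \<Rightarrow> complex) \<Rightarrow> bool" where
  "mdeltas_vanish G m q \<longleftrightarrow>
     (\<forall>gs. length gs = m \<longrightarrow> set gs \<subseteq> G \<longrightarrow> (\<forall>x\<in>G. mdeltas gs q x = 0))"

lemma gen_poly_iff_mdeltas_vanish: "gen_poly G q \<longleftrightarrow> (\<exists>m. mdeltas_vanish G (Suc m) q)"
  unfolding gen_poly_def mdeltas_vanish_def ..

lemma mdeltas_replicate:
  "mdeltas (replicate j x) q (x ^ n * z) = (fwd_diff ^^ j) (\<lambda>n. q (x ^ n * z)) n"
proof (induction j arbitrary: n)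
  case (Suc j)
  have shift: "x ^ n * z * x = x ^ Suc n * z"
    by (simp add: mult_ac)
  show ?case
    using Suc[of n] Suc[of "Suc n"] by (simp add: mdelta_def fwd_diff_def shift)
qed simp

lemma mdeltas_mdelta: "mdeltas gs (mdelta g q) = mdeltas (gs @ [g]) q"
  by (induction gs) simp_all

section \<open>Invariance of the quotient f/j\<close>

lemma quotient_recurrence:
  assumes R: "subring_C R" and f: "additive_on R f" and t: "\<forall>i<k. t i \<in> R"
    and inv: "\<forall>g\<in>gen_semigroup k t. \<forall>y\<in>R - {0}. f (g * y) / (g * y) = f y / y"
    and x: "x \<in> R" "x \<noteq> 0" and z: "z \<in> R" "z \<noteq> 0"
    and rel: "(\<Sum>e\<in>S. of_int (c e) * (monom_val k t e * x ^ e k)) = 0"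
  shows "(\<Sum>e\<in>S. of_int (c e) * (monom_val k t e * x ^ e k) * (f (x ^ e k * z) / (x ^ e k * z))) = 0"
proof -
  define y where "y e = monom_val k t e * (x ^ e k * z)" for e
  have xz: "x ^ e k * z \<in> R - {0}" for e
    using subring_C_mult[OF R subring_C_power[OF R x(1)] z(1)] x(2) z(2) by simp
  have y: "y e \<in> R" for e
    unfolding y_def using subring_C_mult[OF R monom_val_in_subring[OF R t]] xz by blast
  have "(\<Sum>e\<in>S. of_int (c e) * y e) = (\<Sum>e\<in>S. of_int (c e) * (monom_val k t e * x ^ e k)) * z"
    unfolding sum_distrib_right by (rule sum.cong) (simp_all add: y_def mult_ac)
  then have "0 = f (\<Sum>e\<in>S. of_int (c e) * y e)"
    using rel additive_on_zero[OF R f] by simp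
  also have "\<dots> = (\<Sum>e\<in>S. of_int (c e) * f (y e))"
    by (rule additive_on_int_combination[OF R f y])
  also have "\<dots> = (\<Sum>e\<in>S. of_int (c e) * (monom_val k t e * x ^ e k) * (f (x ^ e k * z) / (x ^ e k * z))) * z"
    unfolding sum_distrib_right
  proof (rule sum.cong)
    fix e
    have "f (y e) / y e = f (x ^ e k * z) / (x ^ e k * z)"
      unfolding y_def by (rule inv[rule_format, OF monom_val_in_gen_semigroup xz])
    moreover have "f (y e) = y e * (f (y e) / y e)"
      using additive_on_zero[OF R f] by (cases "y e = 0") simp_all
    ultimately show "of_int (c e) * f (y e) =
        of_int (c e) * (monom_val k t e * x ^ e k) * (f (x ^ e k * z) / (x ^ e k * z)) * z"
      unfolding y_def by (simp add: mult_ac)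
  qed simp
  finally show ?thesis
    using z(2) by simp
qed

lemma quotient_shift_invariant:
  assumes R: "subring_C R" and f: "additive_on R f" and t: "\<forall>i<k. t i \<in> R"
    and inv: "\<forall>g\<in>gen_semigroup k t. \<forall>y\<in>R - {0}. f (g * y) / (g * y) = f y / y"
    and vanish: "mdeltas_vanish (R - {0}) M (\<lambda>x. f x / x)"
    and x: "x \<in> R" "x \<noteq> 0" and z: "z \<in> R" "z \<noteq> 0"
    and rel: "(\<Sum>e\<in>S. of_int (c e) * (monom_val k t e * x ^ e k)) = 0"
    and rel': "(\<Sum>e\<in>S. of_int (c e) * of_nat (e k) * (monom_val k t e * x ^ e k)) \<noteq> 0"
  shows "f (x * z) / (x * z) = f z / z"
proof -
  define u where "u n = f (x ^ n * z) / (x ^ n * z)" for n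
  define w where "w e = of_int (c e) * (monom_val k t e * x ^ e k)" for e
  have xz: "x ^ n * z \<in> R" "x ^ n * z \<noteq> 0" for n
    using subring_C_mult[OF R subring_C_power[OF R x(1)] z(1)] x(2) z(2) by simp_all
  have "lin_recurrence S w (\<lambda>e. e k) u"
    unfolding lin_recurrence_def
  proof
    fix n
    have shift: "x ^ e k * (x ^ n * z) = x ^ (n + e k) * z" for e
      by (simp add: power_add mult_ac)
    have "(\<Sum>e\<in>S. w e * u (n + e k)) =
        (\<Sum>e\<in>S. of_int (c e) * (monom_val k t e * x ^ e k) *
          (f (x ^ e k * (x ^ n * z)) / (x ^ e k * (x ^ n * z))))"
      by (simp only: u_def w_def shift)
    also have "\<dots> = 0"
      by (rule quotient_recurrence[OF R f t inv x xz[of n] rel])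
    finally show "(\<Sum>e\<in>S. w e * u (n + e k)) = 0" .
  qed
  moreover have "(\<Sum>e\<in>S. w e) = 0"
    using rel unfolding w_def .
  moreover have "(\<Sum>e\<in>S. w e * of_nat (e k)) \<noteq> 0"
    using rel' unfolding w_def by (simp add: mult_ac)
  moreover have "(fwd_diff ^^ M) u = (\<lambda>_. 0)"
  proof
    fix n
    have "mdeltas (replicate M x) (\<lambda>x. f x / x) (x ^ n * z) = 0"
      by (rule vanish[unfolded mdeltas_vanish_def, rule_format]) (use x xz in auto)
    then show "(fwd_diff ^^ M) u n = 0"
      using mdeltas_replicate[of M x "\<lambda>x. f x / x" n z] unfolding u_def by simp
  qed
  ultimately have "fwd_diff u = (\<lambda>_. 0)"
    by (rule lin_recurrence_poly_imp_const)
  then show ?thesis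
    using fun_cong[of "fwd_diff u" _ 0] unfolding fwd_diff_def u_def by simp
qed

lemma additive_vanishes_if_quotient_invariant:
  assumes R: "subring_C R" and tr: "trdeg_eq (frac_field R) k"
    and t: "\<forall>i<k. t i \<in> R" and ind: "alg_indep k t" and f: "additive_on R f"
    and vanish: "mdeltas_vanish (R - {0}) M (\<lambda>x. f x / x)"
    and inv: "\<forall>g\<in>gen_semigroup k t. \<forall>y\<in>R - {0}. f (g * y) / (g * y) = f y / y"
    and f1: "f 1 = 0"
  shows "\<forall>x\<in>R. f x = 0"
proof
  fix x assume x: "x \<in> R"
  show "f x = 0"
  proof (cases "x = 0")
    case True
    then show ?thesis using additive_on_zero[OF R f] by simp
  next
    case False
    obtain S c where rel: "(\<Sum>e\<in>S. of_int (c e) * (monom_val k t e * x ^ e k)) = 0"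
      and rel': "(\<Sum>e\<in>S. of_int (c e) * of_nat (e k) * (monom_val k t e * x ^ e k)) \<noteq> 0"
      using exists_relation_over_generators[OF R tr t ind x False] by blast
    have "f (x * 1) / (x * 1) = f 1 / 1"
      by (rule quotient_shift_invariant[OF R f t inv vanish x False subring_C_one[OF R] _ rel rel']) simp
    then show ?thesis
      using False f1 by simp
  qed
qed

lemma additive_vanishes_if_mdeltas_vanish:
  assumes R: "subring_C R" and tr: "trdeg_eq (frac_field R) k"
    and t: "\<forall>i<k. t i \<in> R" and ind: "alg_indep k t"
  shows "additive_on R f \<Longrightarrow> mdeltas_vanish (R - {0}) m (\<lambda>x. f x / x) \<Longrightarrow>
    \<forall>x\<in>gen_semigroup k t. f x = 0 \<Longrightarrow> \<forall>x\<in>R. f x = 0"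
proof (induction m arbitrary: f)
  case 0
  then have "f x / x = 0" if "x \<in> R - {0}" for x
    using that unfolding mdeltas_vanish_def by fastforce
  then show ?case
    using additive_on_zero[OF R "0.prems"(1)] by (metis DiffI divide_eq_0_iff singletonD)
next
  case (Suc m)
  have "f (g * y) / (g * y) = f y / y" if g: "g \<in> gen_semigroup k t" and y: "y \<in> R - {0}" for g y
  proof -
    have gR: "g \<in> R" "g \<noteq> 0"
      using gen_semigroup_subset[OF R t ind] g by auto
    define fg where "fg z = f (g * z) / g - f z" for z
    have "additive_on R fg"
      using Suc.prems(1) subring_C_mult[OF R gR(1)]
      unfolding additive_on_def fg_def by (simp add: distrib_left add_divide_distrib)
    moreover have "mdeltas_vanish (R - {0}) m (\<lambda>z. fg z / z)"
    proof -
      have "(\<lambda>z. fg z / z) = mdelta g (\<lambda>x. f x / x)"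
        by (simp add: fun_eq_iff fg_def mdelta_def diff_divide_distrib mult.commute)
      then show ?thesis
        using Suc.prems(2) gR unfolding mdeltas_vanish_def by (auto simp: mdeltas_mdelta)
    qed
    moreover have "\<forall>x\<in>gen_semigroup k t. fg x = 0"
      using Suc.prems(3) gen_semigroup_mult[OF g] unfolding fg_def by simp
    ultimately have "fg y = 0"
      using Suc.IH y by blast
    then have "f (g * y) / g = f y"
      unfolding fg_def by simp
    then show ?thesis
      by (metis divide_divide_eq_left)
  qed
  then show ?case
    using additive_vanishes_if_quotient_invariant[OF R tr t ind Suc.prems(1,2)] Suc.prems(3)
      gen_semigroup_one by blast
qed

theorem lemma4p1:
  fixes R :: "complex set" and k :: nat and t :: "nat \<Rightarrow> complex"
    and f :: "complex \<Rightarrow> complex"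
  assumes "subring_C R"
    and "trdeg_eq (frac_field R) k"
    and "\<forall>i<k. t i \<in> R"
    and "alg_indep k t"
    and "\<forall>x\<in>R. \<forall>y\<in>R. f (x + y) = f x + f y"
    and "gen_poly (R - {0}) (\<lambda>x. f x / x)"
    and "\<forall>x\<in>gen_semigroup k t. f x = 0"
  shows "\<forall>x\<in>R. f x = 0"
proof -
  obtain m where "mdeltas_vanish (R - {0}) (Suc m) (\<lambda>x. f x / x)"
    using assms(6) unfolding gen_poly_iff_mdeltas_vanish by blast
  then show ?thesis
    using additive_vanishes_if_mdeltas_vanish[OF assms(1-4)] assms(5,7) unfolding additive_on_def by blast
qed

end
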